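(* Let $\mathcal{T}$ be an MPQ-tree of an interval graph $G=(V,E)$, let $(x,y)\in E$ with $x$ over $y$ and $node(x)\neq node(y)$, and suppose the $\langle x,y\rangle$-tree-path starts in a central section $S_a$ of the Q-node $node(x)$. If there is a vertex $q\in S_a\setminus(S_{l(x)}\cup S_{r(x)})$, then $(x,y)$ is not an interval edge.
   Context: Graphs are finite and simple; for $G=(V,E)$ and $e\in E$, $G-e=(V,E\setminus\{e\})$. An edge $(x,y)\in E$ of an interval graph $G$ is an interval edge if $G-(x,y)$ is an interval graph. An MPQ-tree of an interval graph $G=(V,E)$, $V=\{1,\dots,n\}$, is a rooted plane tree whose nodes are P-nodes and Q-nodes. Each P-node carries a (possibly empty) set of vertices. A Q-node has $k\ge 3$ ordered positions $1,\dots,k$; position $i$ carries a set $S_i\subseteq V$ (the $i$-th section) and a child subtree $T_i$, which may be empty. Every vertex $v$ is assigned to exactly one node $node(v)$: either $v$ lies in the set of the P-node $node(v)$, or $node(v)$ is a Q-node and $v$ lies exactly in the sections $S_{l(v)},\dots,S_{r(v)}$ of it, with $l(v)<r(v)$. For a node with child subtrees $T_1,\dots,T_k$, $V_i$ denotes the set of vertices assigned to nodes of $T_i$ ($V_i=\emptyset$ if $T_i$ is empty). The maximal cliques of $G$ are in bijection with the descending paths from the root which at a P-node continue into one of its children (stopping if there is none) and at a Q-node choose a position $i$ and continue into $T_i$ (stopping if $T_i$ is empty); the clique is the union of the sets of the visited P-nodes and the chosen sections. Reading these cliques left to right gives a linear order of the maximal cliques, and the orders obtained this way after arbitrarily permuting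 children of P-nodes and reversing the positions of Q-nodes are exactly the orders of the maximal cliques of $G$ in which the cliques containing any fixed vertex are consecutive. Moreover, for every Q-node with sections $S_1,\dots,S_k$: (a) $V_1\neq\emptyset$ and $V_k\ne\emptyset$; (b) $S_1\subseteq S_2$ and $S_k\subseteq S_{k-1}$; (c) $S_{i-1}\cap S_i\neq\emptyset$ for $2\le i\le k$; (d) $S_{i-1}\neq S_i$ for $2\le i\le k$; (e) $(S_i\cap S_{i+1})\setminus S_1\neq\emptyset$ and $(S_{i-1}\cap S_i)\setminus S_k\neq\emptyset$ for $2\le i\le k-1$; (f) $(S_{i-1}\cup V_{i-1})\setminus S_i\neq\emptyset$ and $(S_i\cup V_i)\setminus S_{i-1}\neq\emptyset$ for $2\le i\le k$; and further (g) no empty P-node has an empty P-node as its parent, (h) no P-node has exactly one child whose root is a P-node, (i) every child subtree of a P-node is nonempty. We say $x$ is over $y$ if $node(x)$ is the lowest common ancestor of $node(x)$ and $node(y)$ in $\mathcal{T}$. For $x$ over $y$ with $node(x)\ne node(y)$, the $\langle x,y\rangle$-tree-path is the tree path $node(x)=n_1,n_2,\dots,n_t=node(y)$. It starts in a central section $S_a$ if $n_1$ is a Q-node and $n_2$ lies in the subtree $T_a$ of $n_1$ with $l(x)<a<r(x)$. *)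

theory Defs
  imports Complex_Main "HOL-Library.Multiset"
begin

definition graph :: "'a set \<Rightarrow> 'a set set \<Rightarrow> bool" where
  "graph V E \<longleftrightarrow> finite V \<and> E \<subseteq> {{u, v} | u v. u \<in> V \<and> v \<in> V \<and> u \<noteq> v}"

definition interval_graph :: "'a set \<Rightarrow> 'a set set \<Rightarrow> bool" where
  "interval_graph V E \<longleftrightarrow> graph V E \<and>
     (\<exists>lo hi :: 'a \<Rightarrow> real. (\<forall>v\<in>V. lo v \<le> hi v) \<and>
        (\<forall>u\<in>V. \<forall>v\<in>V. u \<noteq> v \<longrightarrow> ({u, v} \<in> E \<longleftrightarrow> lo u \<le> hi v \<and> lo v \<le> hi u)))"

definition interval_edge :: "'a set \<Rightarrow> 'a set set \<Rightarrow> 'a \<Rightarrow> 'a \<Rightarrow> bool" where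
  "interval_edge V E x y \<longleftrightarrow> {x, y} \<in> E \<and> interval_graph V (E - {{x, y}})"

definition is_clique :: "'a set \<Rightarrow> 'a set set \<Rightarrow> 'a set \<Rightarrow> bool" where
  "is_clique V E C \<longleftrightarrow> C \<subseteq> V \<and> (\<forall>u\<in>C. \<forall>v\<in>C. u \<noteq> v \<longrightarrow> {u, v} \<in> E)"

definition max_cliques :: "'a set \<Rightarrow> 'a set set \<Rightarrow> 'a set set" where
  "max_cliques V E = {C. is_clique V E C \<and> (\<forall>D. is_clique V E D \<and> C \<subseteq> D \<longrightarrow> D = C)}"

definition consecutive_clique_order :: "'a set \<Rightarrow> 'a set set \<Rightarrow> 'a set list \<Rightarrow> bool" where
  "consecutive_clique_order V E L \<longleftrightarrow> distinct L \<and> set L = max_cliques V E \<and>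
     (\<forall>v i j k. i \<le> j \<and> j \<le> k \<and> k < length L \<and> v \<in> L ! i \<and> v \<in> L ! k \<longrightarrow> v \<in> L ! j)"

text \<open>Empty is the empty child subtree (allowed only below Q-nodes).
  Q ss: Q-node with positions 0..k-1 (0-based!), position i carrying section fst (ss!i)
  and child subtree snd (ss!i).\<close>
datatype 'a mpq = Empty | PN "'a set" "'a mpq list" | QN "('a set \<times> 'a mpq) list"

fun subtree_at :: "'a mpq \<Rightarrow> nat list \<Rightarrow> 'a mpq option" where
  "subtree_at t [] = Some t"
| "subtree_at Empty (i # p) = None"
| "subtree_at (PN S cs) (i # p) = (if i < length cs then subtree_at (cs ! i) p else None)"
| "subtree_at (QN ss) (i # p) = (if i < length ss then subtree_at (snd (ss ! i)) p else None)"

fun node_verts :: "'a mpq \<Rightarrow> 'a set" where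
  "node_verts Empty = {}"
| "node_verts (PN S cs) = S"
| "node_verts (QN ss) = (\<Union>i<length ss. fst (ss ! i))"

fun tree_verts :: "'a mpq \<Rightarrow> 'a set" where
  "tree_verts Empty = {}"
| "tree_verts (PN S cs) = S \<union> \<Union> (set (map tree_verts cs))"
| "tree_verts (QN ss) = \<Union> (set (map (\<lambda>(S, t). S \<union> tree_verts t) ss))"

definition assigned :: "'a mpq \<Rightarrow> 'a \<Rightarrow> nat list \<Rightarrow> bool" where
  "assigned T v p \<longleftrightarrow> (\<exists>t. subtree_at T p = Some t \<and> t \<noteq> Empty \<and> v \<in> node_verts t)"

definition node_of :: "'a mpq \<Rightarrow> 'a \<Rightarrow> nat list" where
  "node_of T v = (THE p. assigned T v p)"

fun cliques :: "'a mpq \<Rightarrow> 'a set list" where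
  "cliques Empty = [{}]"
| "cliques (PN S cs) = (if cs = [] then [S] else concat (map (\<lambda>c. map ((\<union>) S) (cliques c)) cs))"
| "cliques (QN ss) = concat (map (\<lambda>(S, t). map ((\<union>) S) (cliques t)) ss)"

inductive equiv_tree :: "'a mpq \<Rightarrow> 'a mpq \<Rightarrow> bool" where
  "equiv_tree Empty Empty"
| "list_all2 equiv_tree cs ds \<Longrightarrow> mset ds' = mset ds \<Longrightarrow> equiv_tree (PN S cs) (PN S ds')"
| "list_all2 (\<lambda>a b. fst a = fst b \<and> equiv_tree (snd a) (snd b)) ss ss'
     \<Longrightarrow> equiv_tree (QN ss) (QN ss')"
| "list_all2 (\<lambda>a b. fst a = fst b \<and> equiv_tree (snd a) (snd b)) ss ss'
     \<Longrightarrow> equiv_tree (QN ss) (QN (rev ss'))"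

definition sec_idx :: "('a set \<times> 'a mpq) list \<Rightarrow> 'a \<Rightarrow> nat set" where
  "sec_idx ss v = {i. i < length ss \<and> v \<in> fst (ss ! i)}"

text \<open>l(v) and r(v) (0-based) for a vertex v of the Q-node with positions ss.\<close>
definition lsec :: "('a set \<times> 'a mpq) list \<Rightarrow> 'a \<Rightarrow> nat" where
  "lsec ss v = Min (sec_idx ss v)"
definition rsec :: "('a set \<times> 'a mpq) list \<Rightarrow> 'a \<Rightarrow> nat" where
  "rsec ss v = Max (sec_idx ss v)"

text \<open>Local conditions at a single node (Q-node conditions (a)-(f), vertex spans,
  and P-node conditions (g)-(i)). Indices are 0-based: paper's position i is i-1 here.\<close>
definition node_ok :: "'a mpq \<Rightarrow> bool" where
  "node_ok t \<longleftrightarrow> (case t of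
      Empty \<Rightarrow> True
    | PN S cs \<Rightarrow>
        (S = {} \<longrightarrow> (\<forall>c\<in>set cs. \<forall>cs'. c \<noteq> PN {} cs')) \<and>
        (\<forall>c. cs = [c] \<longrightarrow> (\<forall>S' cs'. c \<noteq> PN S' cs')) \<and>
        Empty \<notin> set cs
    | QN ss \<Rightarrow> (let k = length ss; Sec = (\<lambda>i. fst (ss ! i)); Vs = (\<lambda>i. tree_verts (snd (ss ! i))) in
        k \<ge> 3 \<and>
        (\<forall>v \<in> node_verts t. \<exists>l r. l < r \<and> r < k \<and> sec_idx ss v = {l..r}) \<and>
        Vs 0 \<noteq> {} \<and> Vs (k - 1) \<noteq> {} \<and>
        Sec 0 \<subseteq> Sec 1 \<and> Sec (k - 1) \<subseteq> Sec (k - 2) \<and>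
        (\<forall>i. 1 \<le> i \<and> i \<le> k - 1 \<longrightarrow> Sec (i - 1) \<inter> Sec i \<noteq> {}) \<and>
        (\<forall>i. 1 \<le> i \<and> i \<le> k - 1 \<longrightarrow> Sec (i - 1) \<noteq> Sec i) \<and>
        (\<forall>i. 1 \<le> i \<and> i \<le> k - 2 \<longrightarrow>
            (Sec i \<inter> Sec (i + 1)) - Sec 0 \<noteq> {} \<and> (Sec (i - 1) \<inter> Sec i) - Sec (k - 1) \<noteq> {}) \<and>
        (\<forall>i. 1 \<le> i \<and> i \<le> k - 1 \<longrightarrow>
            (Sec (i - 1) \<union> Vs (i - 1)) - Sec i \<noteq> {} \<and> (Sec i \<union> Vs i) - Sec (i - 1) \<noteq> {})))"

definition is_mpq_tree :: "'a set \<Rightarrow> 'a set set \<Rightarrow> 'a mpq \<Rightarrow> bool" where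
  "is_mpq_tree V E T \<longleftrightarrow>
     T \<noteq> Empty \<and>
     tree_verts T \<subseteq> V \<and>
     (\<forall>v\<in>V. \<exists>!p. assigned T v p) \<and>
     distinct (cliques T) \<and> set (cliques T) = max_cliques V E \<and>
     {cliques T' | T'. equiv_tree T T'} = {L. consecutive_clique_order V E L} \<and>
     (\<forall>p t. subtree_at T p = Some t \<longrightarrow> node_ok t)"

text \<open>x is over y: node(x) is the lowest common ancestor of node(x) and node(y),
  i.e. node(x) is an ancestor of (or equal to) node(y).\<close>
definition over :: "'a mpq \<Rightarrow> 'a \<Rightarrow> 'a \<Rightarrow> bool" where
  "over T x y \<longleftrightarrow> (\<exists>rest. node_of T y = node_of T x @ rest)"

definition starts_in_central :: "'a mpq \<Rightarrow> 'a \<Rightarrow> 'a \<Rightarrow> ('a set \<times> 'a mpq) list \<Rightarrow> nat \<Rightarrow> bool" where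
  "starts_in_central T x y ss a \<longleftrightarrow>
     subtree_at T (node_of T x) = Some (QN ss) \<and>
     (\<exists>rest. node_of T y = node_of T x @ a # rest) \<and>
     lsec ss x < a \<and> a < rsec ss x"

end

theory Submission
  imports Defs
begin

text \<open>
  In every clique order realised by the tree, x lies in a clique without y on both sides of a
  clique containing both: x spans the sections l(x) < a < r(x) of its Q-node, while y lives only
  in the subtree below section a, and reordering the tree can only reverse the Q-node or move
  whole blocks. Conversely, from an interval model of G - xy sort the maximal cliques of G by
  the largest left endpoint in the clique (with x removed if it also contains y). Since every
  maximal clique containing y contains x and q, and every one containing q contains x, this
  order keeps the cliques of each vertex consecutive, so the tree realises it; but there the
  pattern above would make the intervals of x and y meet.
\<close>

section \<open>Navigating MPQ-trees\<close>

lemma subtree_at_append: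
  "subtree_at T p = Some t \<Longrightarrow> subtree_at T (p @ p') = subtree_at t p'"
  by (induction T p rule: subtree_at.induct) (auto split: if_splits)

lemma assigned_append:
  "subtree_at T p = Some t \<Longrightarrow> assigned t v p' \<Longrightarrow> assigned T v (p @ p')"
  by (simp add: assigned_def subtree_at_append)

lemma assigned_PN_Cons:
  "assigned (PN S cs) v (i # p) \<longleftrightarrow> i < length cs \<and> assigned (cs ! i) v p"
  by (simp add: assigned_def)

lemma assigned_QN_Cons:
  "assigned (QN ss) v (i # p) \<longleftrightarrow> i < length ss \<and> assigned (snd (ss ! i)) v p"
  by (simp add: assigned_def)

lemma node_verts_subset_tree_verts: "node_verts t \<subseteq> tree_verts t"
proof (cases t)
  case (QN ss)
  show ?thesis unfolding QN
  proof
    fix v assume "v \<in> node_verts (QN ss)"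
    then obtain i where i: "i < length ss" "v \<in> fst (ss ! i)" by auto
    then have "ss ! i \<in> set ss" by simp
    with i show "v \<in> tree_verts (QN ss)" by (cases "ss ! i") force
  qed
qed auto

lemma tree_verts_subtree_at:
  "subtree_at T p = Some t \<Longrightarrow> tree_verts t \<subseteq> tree_verts T"
proof (induction T p rule: subtree_at.induct)
  case (3 S cs i p)
  then show ?case by (auto split: if_splits)
next
  case (4 ss i p)
  then have i: "i < length ss" by (auto split: if_splits)
  then have "ss ! i \<in> set ss" by simp
  with 4 i show ?case by (cases "ss ! i") (force split: if_splits)
qed auto

lemma tree_verts_imp_assigned: "v \<in> tree_verts t \<Longrightarrow> \<exists>p. assigned t v p"
proof (induction t)
  case Empty
  then show ?case by simp
next
  case (PN S cs)
  show ?case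
  proof (cases "v \<in> S")
    case True
    then have "assigned (PN S cs) v []" by (simp add: assigned_def)
    then show ?thesis ..
  next
    case False
    with PN.prems obtain c where c: "c \<in> set cs" "v \<in> tree_verts c" by auto
    then obtain i where i: "i < length cs" "cs ! i = c" by (auto simp: in_set_conv_nth)
    from PN.IH[OF c] obtain p where "assigned c v p" by blast
    with i have "assigned (PN S cs) v (i # p)" by (simp add: assigned_PN_Cons)
    then show ?thesis ..
  qed
next
  case (QN ss)
  from QN.prems obtain S c where Sc: "(S, c) \<in> set ss" "v \<in> S \<or> v \<in> tree_verts c" by auto
  then obtain i where i: "i < length ss" "ss ! i = (S, c)" by (auto simp: in_set_conv_nth)
  show ?case
  proof (cases "v \<in> S")
    case True
    with i have "assigned (QN ss) v []" by (force simp: assigned_def)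
    then show ?thesis ..
  next
    case False
    with Sc QN.IH obtain p where "assigned c v p" by fastforce
    with i have "assigned (QN ss) v (i # p)" by (simp add: assigned_QN_Cons)
    then show ?thesis ..
  qed
qed

lemma set_cliques_PN:
  "cs \<noteq> [] \<Longrightarrow> set (cliques (PN S cs)) = (\<Union>c\<in>set cs. (\<union>) S ` set (cliques c))"
  by auto

lemma set_cliques_QN:
  "set (cliques (QN ss)) = (\<Union>(S, c)\<in>set ss. (\<union>) S ` set (cliques c))"
  by auto

lemma mem_cliques_QN:
  "C \<in> set (cliques (QN ss)) \<longleftrightarrow>
     (\<exists>j<length ss. \<exists>D\<in>set (cliques (snd (ss ! j))). C = fst (ss ! j) \<union> D)"
  unfolding set_cliques_QN by (fastforce simp: in_set_conv_nth)

lemma cliques_subset_tree_verts: "C \<in> set (cliques t) \<Longrightarrow> C \<subseteq> tree_verts t"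
proof (induction t arbitrary: C)
  case (QN ss)
  then show ?case by (fastforce simp: set_cliques_QN)
qed (auto split: if_splits)

definition all_nodes_ok :: "'a mpq \<Rightarrow> bool" where
  "all_nodes_ok t \<longleftrightarrow> (\<forall>p s. subtree_at t p = Some s \<longrightarrow> node_ok s)"

lemma all_nodes_ok_subtree_at:
  "all_nodes_ok T \<Longrightarrow> subtree_at T p = Some t \<Longrightarrow> all_nodes_ok t"
  unfolding all_nodes_ok_def by (metis subtree_at_append)

lemma all_nodes_ok_root: "all_nodes_ok t \<Longrightarrow> node_ok t"
  unfolding all_nodes_ok_def by (metis subtree_at.simps(1))

lemma node_ok_QN_length: "node_ok (QN ss) \<Longrightarrow> 3 \<le> length ss"
  by (simp add: node_ok_def Let_def)

lemma node_ok_QN_sec_idx: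
  "node_ok (QN ss) \<Longrightarrow> v \<in> node_verts (QN ss) \<Longrightarrow>
     \<exists>l r. l < r \<and> r < length ss \<and> sec_idx ss v = {l..r}"
  unfolding node_ok_def Let_def by (simp only: mpq.case)

lemma node_ok_QN_section_iff:
  assumes "node_ok (QN ss)" "v \<in> node_verts (QN ss)"
  shows "rsec ss v < length ss"
    and "j < length ss \<Longrightarrow> v \<in> fst (ss ! j) \<longleftrightarrow> lsec ss v \<le> j \<and> j \<le> rsec ss v"
proof -
  obtain l r where lr: "l < r" "r < length ss" "sec_idx ss v = {l..r}"
    using node_ok_QN_sec_idx[OF assms] by blast
  have "lsec ss v = l" unfolding lsec_def lr(3) using lr(1) by (intro Min_eqI) auto
  moreover have "rsec ss v = r" unfolding rsec_def lr(3) using lr(1) by (intro Max_eqI) auto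
  moreover have "j < length ss \<Longrightarrow> v \<in> fst (ss ! j) \<longleftrightarrow> j \<in> sec_idx ss v"
    by (simp add: sec_idx_def)
  ultimately show "rsec ss v < length ss"
    and "j < length ss \<Longrightarrow> v \<in> fst (ss ! j) \<longleftrightarrow> lsec ss v \<le> j \<and> j \<le> rsec ss v"
    using lr by auto
qed

lemma cliques_nonempty: "all_nodes_ok t \<Longrightarrow> cliques t \<noteq> []"
proof (induction t)
  case (PN S cs)
  show ?case
  proof (cases cs)
    case (Cons c cs')
    then have "subtree_at (PN S cs) [0] = Some c" by simp
    with PN.prems have "all_nodes_ok c" by (rule all_nodes_ok_subtree_at)
    with PN.IH[of c] Cons show ?thesis by simp
  qed simp
next
  case (QN ss)
  have "3 \<le> length ss" using node_ok_QN_length all_nodes_ok_root QN.prems by blast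
  then obtain S c ss' where ss: "ss = (S, c) # ss'" by (cases ss) auto
  then have "subtree_at (QN ss) [0] = Some c" by simp
  with QN.prems have "all_nodes_ok c" by (rule all_nodes_ok_subtree_at)
  with QN.IH[of "(S, c)" c] ss show ?case by simp
qed simp

lemma tree_verts_in_clique:
  "v \<in> tree_verts t \<Longrightarrow> all_nodes_ok t \<Longrightarrow> \<exists>C\<in>set (cliques t). v \<in> C"
proof (induction t)
  case (PN S cs)
  show ?case
  proof (cases "v \<in> S")
    case True
    obtain C where C: "C \<in> set (cliques (PN S cs))"
      using cliques_nonempty[OF PN.prems(2)] by (cases "cliques (PN S cs)") auto
    then have "S \<subseteq> C" by (auto split: if_splits)
    with True C show ?thesis by blast
  next
    case False
    with PN.prems(1) obtain c where c: "c \<in> set cs" "v \<in> tree_verts c" by auto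
    then obtain i where "i < length cs" "cs ! i = c" by (auto simp: in_set_conv_nth)
    then have "subtree_at (PN S cs) [i] = Some c" by simp
    then have "all_nodes_ok c" using PN.prems(2) all_nodes_ok_subtree_at by blast
    from PN.IH[OF c this] obtain C where "C \<in> set (cliques c)" "v \<in> C" by blast
    with c(1) show ?thesis by (auto simp: set_cliques_PN)
  qed
next
  case (QN ss)
  from QN.prems(1) obtain S c where Sc: "(S, c) \<in> set ss" "v \<in> S \<or> v \<in> tree_verts c" by auto
  then obtain i where "i < length ss" "ss ! i = (S, c)" by (auto simp: in_set_conv_nth)
  then have "subtree_at (QN ss) [i] = Some c" by simp
  then have ok: "all_nodes_ok c" using QN.prems(2) all_nodes_ok_subtree_at by blast
  obtain D where D: "D \<in> set (cliques c)" "v \<in> S \<or> v \<in> D"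
  proof (cases "v \<in> S")
    case True
    obtain D where "D \<in> set (cliques c)"
      using cliques_nonempty[OF ok] by (cases "cliques c") auto
    with True that show ?thesis by blast
  next
    case False
    with Sc have "v \<in> tree_verts c" by simp
    from QN.IH[OF Sc(1) _ this ok] that show ?thesis by auto
  qed
  then have "S \<union> D \<in> set (cliques (QN ss))" using Sc(1) by (auto simp: set_cliques_QN)
  with D(2) show ?case by blast
qed simp

definition unique_assignment :: "'a mpq \<Rightarrow> bool" where
  "unique_assignment T \<longleftrightarrow> (\<forall>v p1 p2. assigned T v p1 \<longrightarrow> assigned T v p2 \<longrightarrow> p1 = p2)"

lemma unique_assignmentD:
  "unique_assignment T \<Longrightarrow> assigned T v p1 \<Longrightarrow> assigned T v p2 \<Longrightarrow> p1 = p2"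
  unfolding unique_assignment_def by blast

lemma unique_assignment_PN:
  assumes "unique_assignment (PN S cs)" "i < length cs"
  shows "unique_assignment (cs ! i)"
  unfolding unique_assignment_def
proof (intro allI impI)
  fix v p1 p2 assume "assigned (cs ! i) v p1" "assigned (cs ! i) v p2"
  with assms(2) have "assigned (PN S cs) v (i # p1)" "assigned (PN S cs) v (i # p2)"
    by (simp_all add: assigned_PN_Cons)
  with assms(1) show "p1 = p2" by (blast dest: unique_assignmentD)
qed

lemma unique_assignment_QN:
  assumes "unique_assignment (QN ss)" "i < length ss"
  shows "unique_assignment (snd (ss ! i))"
  unfolding unique_assignment_def
proof (intro allI impI)
  fix v p1 p2 assume "assigned (snd (ss ! i)) v p1" "assigned (snd (ss ! i)) v p2"
  with assms(2) have "assigned (QN ss) v (i # p1)" "assigned (QN ss) v (i # p2)"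
    by (simp_all add: assigned_QN_Cons)
  with assms(1) show "p1 = p2" by (blast dest: unique_assignmentD)
qed

lemma is_mpq_treeD:
  assumes "is_mpq_tree V E T"
  shows "tree_verts T \<subseteq> V" and "\<forall>v\<in>V. \<exists>!p. assigned T v p"
    and "set (cliques T) = max_cliques V E"
    and "{cliques T' | T'. equiv_tree T T'} = {L. consecutive_clique_order V E L}"
    and "all_nodes_ok T"
proof -
  note facts = assms[unfolded is_mpq_tree_def, THEN conjunct2]
  show "tree_verts T \<subseteq> V" using facts by (rule conjunct1)
  show "\<forall>v\<in>V. \<exists>!p. assigned T v p" using facts[THEN conjunct2] by (rule conjunct1)
  show "set (cliques T) = max_cliques V E"
    using facts[THEN conjunct2, THEN conjunct2, THEN conjunct2] by (rule conjunct1)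
  show "{cliques T' | T'. equiv_tree T T'} = {L. consecutive_clique_order V E L}"
    using facts[THEN conjunct2, THEN conjunct2, THEN conjunct2, THEN conjunct2] by (rule conjunct1)
  show "all_nodes_ok T" unfolding all_nodes_ok_def
    using facts[THEN conjunct2, THEN conjunct2, THEN conjunct2, THEN conjunct2] by (rule conjunct2)
qed

lemma mpq_tree_unique_assignment:
  assumes "is_mpq_tree V E T"
  shows "unique_assignment T"
  unfolding unique_assignment_def
proof (intro allI impI)
  fix v p1 p2 assume a: "assigned T v p1" "assigned T v p2"
  then obtain t where t: "subtree_at T p1 = Some t" "v \<in> node_verts t"
    unfolding assigned_def by blast
  have "v \<in> tree_verts t" using node_verts_subset_tree_verts t(2) by (rule subsetD)
  with tree_verts_subtree_at[OF t(1)] have "v \<in> tree_verts T" by blast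
  then have "v \<in> V" using is_mpq_treeD(1)[OF assms] by blast
  with is_mpq_treeD(2)[OF assms] have "\<exists>!p. assigned T v p" by (rule bspec)
  with a show "p1 = p2" by blast
qed

lemma mpq_tree_assigned_node_of:
  assumes "is_mpq_tree V E T" "v \<in> V"
  shows "assigned T v (node_of T v)"
proof -
  from is_mpq_treeD(2)[OF assms(1)] assms(2) have "\<exists>!p. assigned T v p" by (rule bspec)
  then show ?thesis unfolding node_of_def by (rule theI')
qed

section \<open>Cliques below a subtree\<close>

definition assigned_above :: "'a mpq \<Rightarrow> nat list \<Rightarrow> 'a set \<Rightarrow> bool" where
  "assigned_above T p A \<longleftrightarrow> (\<forall>v\<in>A. \<exists>p0 i p1. p = p0 @ i # p1 \<and> assigned T v p0)"

lemma assigned_above_PN: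
  assumes i: "i < length cs" and A: "assigned_above (cs ! i) p A"
  shows "assigned_above (PN S cs) (i # p) (S \<union> A)"
  unfolding assigned_above_def
proof
  fix v assume v: "v \<in> S \<union> A"
  show "\<exists>p0 i' p1. i # p = p0 @ i' # p1 \<and> assigned (PN S cs) v p0"
  proof (cases "v \<in> S")
    case True
    then have "i # p = [] @ i # p \<and> assigned (PN S cs) v []" by (simp add: assigned_def)
    then show ?thesis by blast
  next
    case False
    with v A obtain p0 i' p1 where "p = p0 @ i' # p1" "assigned (cs ! i) v p0"
      unfolding assigned_above_def by blast
    with i have "i # p = (i # p0) @ i' # p1 \<and> assigned (PN S cs) v (i # p0)"
      by (simp add: assigned_PN_Cons)
    then show ?thesis by blast
  qed
qed

lemma assigned_above_QN:
  assumes i: "i < length ss" and A: "assigned_above (snd (ss ! i)) p A"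
  shows "assigned_above (QN ss) (i # p) (fst (ss ! i) \<union> A)"
  unfolding assigned_above_def
proof
  fix v assume v: "v \<in> fst (ss ! i) \<union> A"
  show "\<exists>p0 i' p1. i # p = p0 @ i' # p1 \<and> assigned (QN ss) v p0"
  proof (cases "v \<in> fst (ss ! i)")
    case True
    with i have "v \<in> node_verts (QN ss)" by auto
    then have "i # p = [] @ i # p \<and> assigned (QN ss) v []"
      by (simp add: assigned_def del: node_verts.simps)
    then show ?thesis by blast
  next
    case False
    with v A obtain p0 i' p1 where "p = p0 @ i' # p1" "assigned (snd (ss ! i)) v p0"
      unfolding assigned_above_def by blast
    with i have "i # p = (i # p0) @ i' # p1 \<and> assigned (QN ss) v (i # p0)"
      by (simp add: assigned_QN_Cons)
    then show ?thesis by blast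
  qed
qed

lemma assigned_above_disjoint:
  assumes A: "assigned_above T p A" and u: "unique_assignment T"
    and t: "subtree_at T p = Some t"
  shows "A \<inter> tree_verts t = {}"
proof (rule ccontr)
  assume "A \<inter> tree_verts t \<noteq> {}"
  then obtain v where v: "v \<in> A" "v \<in> tree_verts t" by blast
  from A v(1) obtain p0 i p1 where p: "p = p0 @ i # p1" "assigned T v p0"
    unfolding assigned_above_def by blast
  from tree_verts_imp_assigned[OF v(2)] obtain p' where "assigned t v p'" by blast
  then have "assigned T v (p @ p')" using assigned_append[OF t] by blast
  from unique_assignmentD[OF u p(2) this] have "p0 = p @ p'" .
  then have "length p0 = length p + length p'" by simp
  with p(1) show False by simp
qed

lemma assigned_below_child:
  assumes u: "unique_assignment T" and t: "subtree_at T (i # p) = Some t"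
    and w: "w \<in> tree_verts t"
  shows "\<not> assigned T w []" and "assigned T w (j # p') \<Longrightarrow> j = i"
proof -
  obtain p'' where "assigned t w p''" using tree_verts_imp_assigned[OF w] ..
  from assigned_append[OF t this] have aw: "assigned T w (i # p @ p'')" by simp
  show "\<not> assigned T w []"
  proof
    assume "assigned T w []"
    from unique_assignmentD[OF u this aw] show False by simp
  qed
  show "j = i" if "assigned T w (j # p')" using unique_assignmentD[OF u that aw] by simp
qed

text \<open>A vertex of C below t is assigned below t, which pins down the child into which the
  descending path of C turns.\<close>
lemma clique_decompose_at_subtree:
  "subtree_at T p = Some t \<Longrightarrow> C \<in> set (cliques T) \<Longrightarrow> C \<inter> tree_verts t \<noteq> {} \<Longrightarrow>
    unique_assignment T \<Longrightarrow>
    \<exists>A C'. C = A \<union> C' \<and> C' \<in> set (cliques t) \<and> assigned_above T p A"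
proof (induction T p arbitrary: t C rule: subtree_at.induct)
  case (1 t)
  then show ?case by (rule_tac x="{}" in exI) (auto simp add: assigned_above_def)
next
  case (3 S cs i p)
  then have i: "i < length cs" and st: "subtree_at (cs ! i) p = Some t"
    by (auto split: if_splits)
  then have cs: "cs \<noteq> []" by auto
  from "3.prems"(2) obtain c D where "c \<in> set cs" "D \<in> set (cliques c)" "C = S \<union> D"
    unfolding set_cliques_PN[OF cs] by blast
  then obtain j where j: "j < length cs" "D \<in> set (cliques (cs ! j))" "C = S \<union> D"
    by (auto simp: in_set_conv_nth)
  from "3.prems"(3) obtain w where w: "w \<in> C" "w \<in> tree_verts t" by blast
  note below = assigned_below_child[OF "3.prems"(4) "3.prems"(1) w(2)]
  have "w \<notin> S"
  proof
    assume "w \<in> S"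
    then have "assigned (PN S cs) w []" by (simp add: assigned_def)
    with below(1) show False ..
  qed
  with w j have wD: "w \<in> D" by blast
  with cliques_subset_tree_verts[OF j(2)] have "w \<in> tree_verts (cs ! j)" by blast
  from tree_verts_imp_assigned[OF this] obtain p' where "assigned (cs ! j) w p'" ..
  with j(1) have "assigned (PN S cs) w (j # p')" by (simp add: assigned_PN_Cons)
  then have "j = i" by (rule below(2))
  with j have D: "D \<in> set (cliques (cs ! i))" by simp
  have "D \<inter> tree_verts t \<noteq> {}" using wD w by blast
  from "3.IH"[OF i st D this unique_assignment_PN[OF "3.prems"(4) i]]
  obtain A C' where A: "D = A \<union> C'" "C' \<in> set (cliques t)" "assigned_above (cs ! i) p A"
    by blast
  have "C = (S \<union> A) \<union> C'" using A j by blast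
  with A(2) assigned_above_PN[OF i A(3)] show ?case by blast
next
  case (4 ss i p)
  then have i: "i < length ss" and st: "subtree_at (snd (ss ! i)) p = Some t"
    by (auto split: if_splits)
  from "4.prems"(2) obtain j D where j: "j < length ss" "D \<in> set (cliques (snd (ss ! j)))"
    "C = fst (ss ! j) \<union> D"
    unfolding mem_cliques_QN by blast
  from "4.prems"(3) obtain w where w: "w \<in> C" "w \<in> tree_verts t" by blast
  note below = assigned_below_child[OF "4.prems"(4) "4.prems"(1) w(2)]
  have "w \<notin> fst (ss ! j)"
  proof
    assume "w \<in> fst (ss ! j)"
    with j(1) have "assigned (QN ss) w []" by (force simp: assigned_def)
    with below(1) show False ..
  qed
  with w j have wD: "w \<in> D" by blast
  with cliques_subset_tree_verts[OF j(2)] have "w \<in> tree_verts (snd (ss ! j))" by blast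
  from tree_verts_imp_assigned[OF this] obtain p' where "assigned (snd (ss ! j)) w p'" ..
  with j(1) have "assigned (QN ss) w (j # p')" by (simp add: assigned_QN_Cons)
  then have "j = i" by (rule below(2))
  with j have D: "D \<in> set (cliques (snd (ss ! i)))" by simp
  have "D \<inter> tree_verts t \<noteq> {}" using wD w by blast
  from "4.IH"[OF i st D this unique_assignment_QN[OF "4.prems"(4) i]]
  obtain A C' where A: "D = A \<union> C'" "C' \<in> set (cliques t)" "assigned_above (snd (ss ! i)) p A"
    by blast
  have "C = (fst (ss ! i) \<union> A) \<union> C'" using A j \<open>j = i\<close> by blast
  with A(2) assigned_above_QN[OF i A(3)] show ?case by blast
qed simp

lemma clique_restrict_subtree:
  assumes t: "subtree_at T p = Some t" and u: "unique_assignment T"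
    and C: "C \<in> set (cliques T)" "C \<inter> tree_verts t \<noteq> {}"
  shows "C \<inter> tree_verts t \<in> set (cliques t)"
proof -
  from clique_decompose_at_subtree[OF t C u] obtain A C' where
    A: "C = A \<union> C'" "C' \<in> set (cliques t)" "assigned_above T p A" by blast
  have "A \<inter> tree_verts t = {}" using assigned_above_disjoint[OF A(3) u t] .
  moreover have "C' \<subseteq> tree_verts t" using cliques_subset_tree_verts[OF A(2)] .
  ultimately have "C \<inter> tree_verts t = C'" using A(1) by blast
  with A(2) show ?thesis by simp
qed

lemma list_all2_map_eq:
  "list_all2 R xs ys \<Longrightarrow> (\<And>a b. R a b \<Longrightarrow> f a = g b) \<Longrightarrow> map f xs = map g ys"
  by (induction rule: list_all2_induct) auto

lemma equiv_tree_set_cliques: "equiv_tree t t' \<Longrightarrow> set (cliques t') = set (cliques t)"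
proof (induction rule: equiv_tree.induct)
  case (2 cs ds ds' S)
  have m: "map (\<lambda>c. (\<union>) S ` set (cliques c)) cs = map (\<lambda>c. (\<union>) S ` set (cliques c)) ds"
    using 2(1) by (rule list_all2_map_eq) auto
  have sd: "set ds' = set ds" using 2(2) by (metis set_mset_mset)
  have "length cs = length ds" using 2(1) by (rule list_all2_lengthD)
  then consider "cs = []" "ds' = []" | "cs \<noteq> []" "ds' \<noteq> []" using sd by force
  then show ?case
  proof cases
    case 2
    have "(\<Union>c\<in>set cs. (\<union>) S ` set (cliques c)) = (\<Union>c\<in>set ds'. (\<union>) S ` set (cliques c))"
      using m sd by (metis set_map)
    then show ?thesis by (simp only: set_cliques_PN[OF 2(1)] set_cliques_PN[OF 2(2)])
  qed simp
next
  case (3 ss ss')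
  have "map (\<lambda>(S, c). (\<union>) S ` set (cliques c)) ss = map (\<lambda>(S, c). (\<union>) S ` set (cliques c)) ss'"
    using 3 by (rule list_all2_map_eq) auto
  then show ?case unfolding set_cliques_QN by (metis set_map)
next
  case (4 ss ss')
  have "map (\<lambda>(S, c). (\<union>) S ` set (cliques c)) ss = map (\<lambda>(S, c). (\<union>) S ` set (cliques c)) ss'"
    using 4 by (rule list_all2_map_eq) auto
  then show ?case unfolding set_cliques_QN set_rev by (metis set_map)
qed simp

section \<open>Sandwiched cliques\<close>

definition sandwich :: "'a \<Rightarrow> 'a \<Rightarrow> 'a set list \<Rightarrow> bool" where
  "sandwich x y L \<longleftrightarrow> (\<exists>i j m. i < j \<and> j < m \<and> m < length L \<and>
      x \<in> L ! i \<and> y \<notin> L ! i \<and> x \<in> L ! j \<and> y \<in> L ! j \<and> x \<in> L ! m \<and> y \<notin> L ! m)"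

lemma sandwich_map_Un:
  assumes "sandwich x y L" "x \<notin> S" "y \<notin> S"
  shows "sandwich x y (map ((\<union>) S) L)"
proof -
  obtain i j m where ijm: "i < j" "j < m" "m < length L" "x \<in> L ! i" "y \<notin> L ! i"
    "x \<in> L ! j" "y \<in> L ! j" "x \<in> L ! m" "y \<notin> L ! m"
    using assms(1) unfolding sandwich_def by blast
  with assms(3) show ?thesis unfolding sandwich_def
    by (intro exI[of _ i] exI[of _ j] exI[of _ m]) simp
qed

lemma sandwich_concat:
  assumes "b \<in> set bs" "sandwich x y b"
  shows "sandwich x y (concat bs)"
proof -
  obtain us ws where bs: "bs = us @ b # ws" using split_list[OF assms(1)] by blast
  define n where "n = length (concat us)"
  have nth: "k < length b \<Longrightarrow> concat bs ! (n + k) = b ! k" for k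
    unfolding bs n_def by (simp add: nth_append)
  obtain i j m where ijm: "i < j" "j < m" "m < length b" "x \<in> b ! i" "y \<notin> b ! i"
    "x \<in> b ! j" "y \<in> b ! j" "x \<in> b ! m" "y \<notin> b ! m"
    using assms(2) unfolding sandwich_def by blast
  have "n + m < length (concat bs)" unfolding bs n_def using ijm(3) by simp
  with ijm nth[of i] nth[of j] nth[of m] show ?thesis unfolding sandwich_def
    by (intro exI[of _ "n + i"] exI[of _ "n + j"] exI[of _ "n + m"]) simp
qed

lemma nth_concat_block:
  assumes "i < length bs" "e \<in> set (bs ! i)"
  shows "\<exists>n. concat bs ! n = e \<and>
    length (concat (take i bs)) \<le> n \<and> n < length (concat (take (Suc i) bs))"
proof -
  obtain k where k: "k < length (bs ! i)" "bs ! i ! k = e"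
    using assms(2) by (auto simp: in_set_conv_nth)
  have "bs = take i bs @ bs ! i # drop (Suc i) bs" using assms(1) by (rule id_take_nth_drop)
  then have "concat bs = concat (take i bs) @ bs ! i @ concat (drop (Suc i) bs)"
    by (metis concat.simps(2) concat_append)
  moreover have "concat (take (Suc i) bs) = concat (take i bs) @ bs ! i"
    using assms(1) by (simp add: take_Suc_conv_app_nth)
  ultimately show ?thesis using k
    by (intro exI[of _ "length (concat (take i bs)) + k"]) (simp add: nth_append)
qed

lemma length_concat_take_mono:
  "i \<le> j \<Longrightarrow> length (concat (take i bs)) \<le> length (concat (take j bs))"
  by (metis append_take_drop_id concat_append le_add1 length_append min.absorb1 take_take)

lemma sandwich_concat_blocks:
  assumes "i < j" "j < m" "m < length bs"
    and "A \<in> set (bs ! i)" "x \<in> A" "y \<notin> A"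
    and "B \<in> set (bs ! j)" "x \<in> B" "y \<in> B"
    and "C \<in> set (bs ! m)" "x \<in> C" "y \<notin> C"
  shows "sandwich x y (concat bs)"
proof -
  obtain n1 where n1: "concat bs ! n1 = A" "n1 < length (concat (take (Suc i) bs))"
    using nth_concat_block[of i bs A] assms by auto
  obtain n2 where n2: "concat bs ! n2 = B" "length (concat (take j bs)) \<le> n2"
      "n2 < length (concat (take (Suc j) bs))"
    using nth_concat_block[of j bs B] assms by auto
  obtain n3 where n3: "concat bs ! n3 = C" "length (concat (take m bs)) \<le> n3"
      "n3 < length (concat (take (Suc m) bs))"
    using nth_concat_block[of m bs C] assms by auto
  have "length (concat (take (Suc i) bs)) \<le> length (concat (take j bs))"
    "length (concat (take (Suc j) bs)) \<le> length (concat (take m bs))"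
    "length (concat (take (Suc m) bs)) \<le> length (concat (take (length bs) bs))"
    using assms(1-3) by (simp_all only: length_concat_take_mono Suc_leI less_imp_le)
  then have "n1 < n2" "n2 < n3" "n3 < length (concat bs)" using n1 n2 n3 by auto
  then show ?thesis unfolding sandwich_def using n1 n2 n3 assms by blast
qed

lemma sandwich_equiv_QN:
  assumes lar: "l < a" "a < r" "r < length ss"
    and x: "x \<in> fst (ss ! l)" "x \<in> fst (ss ! a)" "x \<in> fst (ss ! r)"
    and y_sections: "\<forall>j<length ss. y \<notin> fst (ss ! j)"
    and y_subtrees: "y \<notin> tree_verts (snd (ss ! l))" "y \<notin> tree_verts (snd (ss ! r))"
    and y_clique: "\<exists>C\<in>set (cliques (snd (ss ! a))). y \<in> C"
    and nonempty: "cliques (snd (ss ! l)) \<noteq> []" "cliques (snd (ss ! r)) \<noteq> []"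
    and eqv: "equiv_tree (QN ss) t'"
  shows "sandwich x y (cliques t')"
proof -
  from eqv obtain ss' ss'' where t': "t' = QN ss''" and ss'': "ss'' = ss' \<or> ss'' = rev ss'"
    and la: "list_all2 (\<lambda>a b. fst a = fst b \<and> equiv_tree (snd a) (snd b)) ss ss'"
    by (cases rule: equiv_tree.cases) auto
  define g where "g = (\<lambda>(S::'a set, c). map ((\<union>) S) (cliques c))"
  have len: "length ss' = length ss" using la by (simp add: list_all2_lengthD)
  have g: "set (g (ss' ! j)) = (\<union>) (fst (ss ! j)) ` set (cliques (snd (ss ! j)))"
    if "j < length ss" for j
  proof -
    have "fst (ss ! j) = fst (ss' ! j)" "equiv_tree (snd (ss ! j)) (snd (ss' ! j))"
      using la that by (simp_all add: list_all2_conv_all_nth)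
    then show ?thesis unfolding g_def by (cases "ss' ! j") (simp add: equiv_tree_set_cliques)
  qed
  have outer: "\<exists>e\<in>set (g (ss' ! j)). x \<in> e \<and> y \<notin> e"
    if j: "j < length ss" "x \<in> fst (ss ! j)" "y \<notin> tree_verts (snd (ss ! j))"
      "cliques (snd (ss ! j)) \<noteq> []" for j
  proof -
    obtain C where C: "C \<in> set (cliques (snd (ss ! j)))"
      using j(4) by (cases "cliques (snd (ss ! j))") auto
    then have "y \<notin> C" using cliques_subset_tree_verts j(3) by blast
    with C j(1,2) y_sections show ?thesis using g[OF j(1)] by auto
  qed
  obtain e1 e3 where e1: "e1 \<in> set (g (ss' ! l))" "x \<in> e1" "y \<notin> e1"
    and e3: "e3 \<in> set (g (ss' ! r))" "x \<in> e3" "y \<notin> e3"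
    using outer[of l] outer[of r] lar x y_subtrees nonempty by auto
  obtain e2 where e2: "e2 \<in> set (g (ss' ! a))" "x \<in> e2" "y \<in> e2"
    using y_clique g[of a] lar x by auto
  have cl: "cliques t' = concat (map g ss'')" unfolding t' g_def by simp
  from ss'' show ?thesis
  proof
    assume "ss'' = ss'"
    moreover have "sandwich x y (concat (map g ss'))"
      using lar len e1 e2 e3
      by (intro sandwich_concat_blocks[where i=l and j=a and m=r and A=e1 and B=e2 and C=e3])
        simp_all
    ultimately show ?thesis using cl by simp
  next
    assume "ss'' = rev ss'"
    moreover have "rev ss' ! (length ss - Suc r) = ss' ! r"
      "rev ss' ! (length ss - Suc a) = ss' ! a" "rev ss' ! (length ss - Suc l) = ss' ! l"
      using lar len by (simp_all add: rev_nth)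
    then have "sandwich x y (concat (map g (rev ss')))"
      using lar len e1 e2 e3
      by (intro sandwich_concat_blocks[where i="length ss - Suc r" and j="length ss - Suc a"
            and m="length ss - Suc l" and A=e3 and B=e2 and C=e1]) simp_all
    ultimately show ?thesis using cl by simp
  qed
qed

lemma not_assigned_above_child:
  assumes c: "subtree_at T [i] = Some c"
    and free: "\<forall>p0 i' p1. i # p = p0 @ i' # p1 \<longrightarrow> \<not> assigned T x p0 \<and> \<not> assigned T y p0"
  shows "\<forall>p0 i' p1. p = p0 @ i' # p1 \<longrightarrow> \<not> assigned c x p0 \<and> \<not> assigned c y p0"
proof (intro allI impI)
  fix p0 i' p1 assume "p = p0 @ i' # p1"
  then have "i # p = ([i] @ p0) @ i' # p1" by simp
  with free have "\<not> assigned T x ([i] @ p0) \<and> \<not> assigned T y ([i] @ p0)" by blast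
  then show "\<not> assigned c x p0 \<and> \<not> assigned c y p0" using assigned_append[OF c] by blast
qed

text \<open>Ancestors of the node carrying neither x nor y only add the same vertices to each
  clique below them and may shuffle whole blocks, so the pattern survives.\<close>
lemma sandwich_equiv_lift:
  "subtree_at T p = Some t \<Longrightarrow> (\<forall>t'. equiv_tree t t' \<longrightarrow> sandwich x y (cliques t')) \<Longrightarrow>
   (\<forall>p0 i p1. p = p0 @ i # p1 \<longrightarrow> \<not> assigned T x p0 \<and> \<not> assigned T y p0) \<Longrightarrow>
   equiv_tree T T' \<Longrightarrow> sandwich x y (cliques T')"
proof (induction T p arbitrary: t T' rule: subtree_at.induct)
  case (3 S cs i p)
  then have i: "i < length cs" and st: "subtree_at (cs ! i) p = Some t"
    by (auto split: if_splits)
  from "3.prems"(4) obtain ds ds' where T': "T' = PN S ds'" and la: "list_all2 equiv_tree cs ds"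
    and ms: "mset ds' = mset ds"
    by (cases rule: equiv_tree.cases) auto
  have len: "length ds = length cs" using la by (simp add: list_all2_lengthD)
  have "equiv_tree (cs ! i) (ds ! i)" using la i by (simp add: list_all2_conv_all_nth)
  moreover have "\<forall>p0 i' p1. p = p0 @ i' # p1 \<longrightarrow>
      \<not> assigned (cs ! i) x p0 \<and> \<not> assigned (cs ! i) y p0"
    using not_assigned_above_child[of "PN S cs" i "cs ! i" p] "3.prems"(3) i by simp
  ultimately have "sandwich x y (cliques (ds ! i))" using "3.IH"[OF i st "3.prems"(2)] by blast
  moreover have "x \<notin> S" "y \<notin> S"
    using "3.prems"(3)[rule_format, of "[]" i p] by (auto simp: assigned_def)
  ultimately have "sandwich x y (map ((\<union>) S) (cliques (ds ! i)))" by (rule sandwich_map_Un)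
  moreover have "ds ! i \<in> set ds'" using ms i len by (metis nth_mem set_mset_mset)
  then have "map ((\<union>) S) (cliques (ds ! i)) \<in> set (map (\<lambda>c. map ((\<union>) S) (cliques c)) ds')"
    by simp
  ultimately show ?case unfolding T' using sandwich_concat by fastforce
next
  case (4 ss i p)
  then have i: "i < length ss" and st: "subtree_at (snd (ss ! i)) p = Some t"
    by (auto split: if_splits)
  from "4.prems"(4) obtain ss' ss'' where T': "T' = QN ss''" and ss'': "ss'' = ss' \<or> ss'' = rev ss'"
    and la: "list_all2 (\<lambda>a b. fst a = fst b \<and> equiv_tree (snd a) (snd b)) ss ss'"
    by (cases rule: equiv_tree.cases) auto
  have len: "length ss' = length ss" using la by (simp add: list_all2_lengthD)
  have eq: "fst (ss ! i) = fst (ss' ! i)" "equiv_tree (snd (ss ! i)) (snd (ss' ! i))"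
    using la i by (simp_all add: list_all2_conv_all_nth)
  have "\<forall>p0 i' p1. p = p0 @ i' # p1 \<longrightarrow>
      \<not> assigned (snd (ss ! i)) x p0 \<and> \<not> assigned (snd (ss ! i)) y p0"
    using not_assigned_above_child[of "QN ss" i "snd (ss ! i)" p] "4.prems"(3) i by simp
  then have "sandwich x y (cliques (snd (ss' ! i)))"
    using "4.IH"[OF i st "4.prems"(2)] eq(2) by blast
  moreover have "x \<notin> fst (ss' ! i)" "y \<notin> fst (ss' ! i)"
    using "4.prems"(3)[rule_format, of "[]" i p] i eq(1) by (auto simp: assigned_def)
  ultimately have "sandwich x y (map ((\<union>) (fst (ss' ! i))) (cliques (snd (ss' ! i))))"
    by (rule sandwich_map_Un)
  moreover have "ss' ! i \<in> set ss''" using ss'' i len by auto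
  then have "map ((\<union>) (fst (ss' ! i))) (cliques (snd (ss' ! i)))
      \<in> set (map (\<lambda>(S, t). map ((\<union>) S) (cliques t)) ss'')"
    by (auto intro!: image_eqI[where x="ss' ! i"] split: prod.split)
  ultimately show ?case unfolding T' using sandwich_concat by fastforce
qed simp_all

section \<open>The central Q-node\<close>

locale central_start =
  fixes T :: "'a mpq" and x y :: 'a and ss :: "('a set \<times> 'a mpq) list" and a :: nat
    and p rest :: "nat list"
  assumes unique: "unique_assignment T"
    and nodes_ok: "all_nodes_ok T"
    and x_at: "assigned T x p"
    and y_at: "assigned T y (p @ a # rest)"
    and Q_at: "subtree_at T p = Some (QN ss)"
    and central: "lsec ss x < a" "a < rsec ss x"
begin

lemma Q_ok: "node_ok (QN ss)"
  using all_nodes_ok_root[OF all_nodes_ok_subtree_at[OF nodes_ok Q_at]] .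

lemma x_in_Q: "x \<in> node_verts (QN ss)"
  using x_at Q_at unfolding assigned_def by auto

lemma rsec_x_less: "rsec ss x < length ss"
  using node_ok_QN_section_iff(1)[OF Q_ok x_in_Q] .

lemma x_in_section_iff: "j < length ss \<Longrightarrow> x \<in> fst (ss ! j) \<longleftrightarrow> lsec ss x \<le> j \<and> j \<le> rsec ss x"
  using node_ok_QN_section_iff(2)[OF Q_ok x_in_Q] .

lemma a_less: "a < length ss"
  using central rsec_x_less by simp

lemma child_at: "j < length ss \<Longrightarrow> subtree_at T (p @ [j]) = Some (snd (ss ! j))"
  using subtree_at_append[OF Q_at] by simp

lemma child_nodes_ok: "j < length ss \<Longrightarrow> all_nodes_ok (snd (ss ! j))"
  using all_nodes_ok_subtree_at[OF nodes_ok child_at] .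

lemma assigned_in_child:
  assumes "j < length ss" "v \<in> tree_verts (snd (ss ! j))"
  obtains p' where "assigned T v (p @ j # p')"
proof -
  obtain p' where "assigned (snd (ss ! j)) v p'" using tree_verts_imp_assigned[OF assms(2)] ..
  from assigned_append[OF child_at[OF assms(1)] this] have "assigned T v (p @ j # p')" by simp
  then show thesis by (rule that)
qed

lemma Q_verts_not_in_children:
  assumes "v \<in> node_verts (QN ss)" "j < length ss"
  shows "v \<notin> tree_verts (snd (ss ! j))"
proof
  assume "v \<in> tree_verts (snd (ss ! j))"
  then obtain p' where "assigned T v (p @ j # p')" using assigned_in_child assms(2) by blast
  moreover have "assigned T v p" using assms(1) Q_at unfolding assigned_def by auto
  ultimately have "p @ j # p' = p" by (rule unique_assignmentD[OF unique])
  then show False by simp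
qed

lemma y_not_in_Q: "y \<notin> node_verts (QN ss)"
proof
  assume "y \<in> node_verts (QN ss)"
  then have "assigned T y p" using Q_at unfolding assigned_def by auto
  from unique_assignmentD[OF unique y_at this] show False by simp
qed

lemma y_not_in_sections: "j < length ss \<Longrightarrow> y \<notin> fst (ss ! j)"
  using y_not_in_Q by auto

lemma y_in_child_a: "y \<in> tree_verts (snd (ss ! a))"
proof -
  obtain s where s: "subtree_at T (p @ a # rest) = Some s" "y \<in> node_verts s"
    using y_at unfolding assigned_def by blast
  have "subtree_at (QN ss) (a # rest) = Some s" using s(1) subtree_at_append[OF Q_at] by simp
  then have "subtree_at (snd (ss ! a)) rest = Some s" using a_less by (simp split: if_splits)
  from subsetD[OF tree_verts_subtree_at[OF this] subsetD[OF node_verts_subset_tree_verts s(2)]]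
  show ?thesis .
qed

lemma y_not_in_other_children:
  assumes "j < length ss" "j \<noteq> a"
  shows "y \<notin> tree_verts (snd (ss ! j))"
proof
  assume "y \<in> tree_verts (snd (ss ! j))"
  then obtain p' where "assigned T y (p @ j # p')" using assigned_in_child assms(1) by blast
  from unique_assignmentD[OF unique y_at this] assms(2) show False by simp
qed

lemma above_free_of_x_y:
  assumes "p = p0 @ i # p1"
  shows "\<not> assigned T x p0 \<and> \<not> assigned T y p0"
proof (intro conjI notI)
  assume "assigned T x p0"
  from unique_assignmentD[OF unique x_at this] assms show False by simp
next
  assume "assigned T y p0"
  from unique_assignmentD[OF unique y_at this] assms show False by simp
qed

lemma sandwich_equiv_Q: "equiv_tree (QN ss) t' \<Longrightarrow> sandwich x y (cliques t')"
proof (rule sandwich_equiv_QN[where l="lsec ss x" and r="rsec ss x"])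
  show "lsec ss x < a" "a < rsec ss x" "rsec ss x < length ss" using central rsec_x_less by simp_all
  then show "x \<in> fst (ss ! lsec ss x)" "x \<in> fst (ss ! a)" "x \<in> fst (ss ! rsec ss x)"
    using x_in_section_iff by simp_all
  show "\<forall>j<length ss. y \<notin> fst (ss ! j)" using y_not_in_sections by blast
  show "y \<notin> tree_verts (snd (ss ! lsec ss x))" "y \<notin> tree_verts (snd (ss ! rsec ss x))"
    using y_not_in_other_children central rsec_x_less by simp_all
  show "\<exists>C\<in>set (cliques (snd (ss ! a))). y \<in> C"
    using tree_verts_in_clique[OF y_in_child_a child_nodes_ok[OF a_less]] .
  show "cliques (snd (ss ! lsec ss x)) \<noteq> []" "cliques (snd (ss ! rsec ss x)) \<noteq> []"
    using cliques_nonempty[OF child_nodes_ok] central rsec_x_less by simp_all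
qed

lemma sandwich_equiv: "equiv_tree T T' \<Longrightarrow> sandwich x y (cliques T')"
proof (rule sandwich_equiv_lift[OF Q_at])
  show "\<forall>t'. equiv_tree (QN ss) t' \<longrightarrow> sandwich x y (cliques t')"
    using sandwich_equiv_Q by blast
  show "\<forall>p0 i p1. p = p0 @ i # p1 \<longrightarrow> \<not> assigned T x p0 \<and> \<not> assigned T y p0"
    using above_free_of_x_y by blast
qed

lemma clique_through_Q:
  assumes "C \<in> set (cliques T)" "C \<inter> tree_verts (QN ss) \<noteq> {}"
  obtains j D where "j < length ss" "D \<in> set (cliques (snd (ss ! j)))"
    "C \<inter> tree_verts (QN ss) = fst (ss ! j) \<union> D"
  using clique_restrict_subtree[OF Q_at unique assms] that unfolding mem_cliques_QN by blast

lemma clique_with_y: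
  assumes "C \<in> set (cliques T)" "y \<in> C"
  shows "fst (ss ! a) \<subseteq> C"
proof -
  have y: "y \<in> tree_verts (QN ss)"
    using y_in_child_a tree_verts_subtree_at[of "QN ss" "[a]"] a_less by auto
  with assms obtain j D where jD: "j < length ss" "D \<in> set (cliques (snd (ss ! j)))"
    "C \<inter> tree_verts (QN ss) = fst (ss ! j) \<union> D"
    using clique_through_Q by blast
  then have "y \<in> D" using assms(2) y y_not_in_sections by blast
  then have "y \<in> tree_verts (snd (ss ! j))" using cliques_subset_tree_verts[OF jD(2)] by blast
  then have "j = a" using y_not_in_other_children jD(1) by blast
  with jD(3) show ?thesis by blast
qed

lemma clique_with_Q_vertex:
  assumes "C \<in> set (cliques T)" "v \<in> C" "v \<in> node_verts (QN ss)"
  obtains j where "j < length ss" "v \<in> fst (ss ! j)" "fst (ss ! j) \<subseteq> C"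
proof -
  have v: "v \<in> tree_verts (QN ss)" using subsetD[OF node_verts_subset_tree_verts assms(3)] .
  with assms(1,2) obtain j D where jD: "j < length ss" "D \<in> set (cliques (snd (ss ! j)))"
    "C \<inter> tree_verts (QN ss) = fst (ss ! j) \<union> D"
    using clique_through_Q by blast
  have "v \<notin> D"
    using Q_verts_not_in_children[OF assms(3) jD(1)] cliques_subset_tree_verts[OF jD(2)] by blast
  with jD assms(2) v that show thesis by blast
qed

end

locale central_start_witness = central_start +
  fixes q :: 'a
  assumes q: "q \<in> fst (ss ! a) - (fst (ss ! lsec ss x) \<union> fst (ss ! rsec ss x))"
begin

lemma q_in_Q: "q \<in> node_verts (QN ss)"
  using q a_less by auto

lemma q_sections_within_x:
  assumes "j < length ss" "q \<in> fst (ss ! j)"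
  shows "x \<in> fst (ss ! j)"
proof -
  have "lsec ss q \<le> a" "a \<le> rsec ss q" "lsec ss q \<le> j" "j \<le> rsec ss q"
    using node_ok_QN_section_iff(2)[OF Q_ok q_in_Q] assms q a_less by auto
  moreover have "\<not> (lsec ss q \<le> lsec ss x \<and> lsec ss x \<le> rsec ss q)"
    "\<not> (lsec ss q \<le> rsec ss x \<and> rsec ss x \<le> rsec ss q)"
    using node_ok_QN_section_iff(2)[OF Q_ok q_in_Q] q central rsec_x_less by auto
  ultimately show ?thesis using x_in_section_iff assms(1) central by auto
qed

lemma q_ne_x: "q \<noteq> x"
  using q x_in_section_iff central rsec_x_less by auto

lemma q_ne_y: "q \<noteq> y"
  using q_in_Q y_not_in_Q by blast

lemma q_in_tree: "q \<in> tree_verts T"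
  using subsetD[OF tree_verts_subtree_at[OF Q_at] subsetD[OF node_verts_subset_tree_verts q_in_Q]] .

lemma clique_with_y_contains_x_q:
  assumes "C \<in> set (cliques T)" "y \<in> C"
  shows "x \<in> C \<and> q \<in> C"
proof -
  have "x \<in> fst (ss ! a)" using x_in_section_iff[OF a_less] central by simp
  with q clique_with_y[OF assms] show ?thesis by blast
qed

lemma clique_with_q_contains_x:
  assumes "C \<in> set (cliques T)" "q \<in> C"
  shows "x \<in> C"
proof -
  obtain j where "j < length ss" "q \<in> fst (ss ! j)" "fst (ss ! j) \<subseteq> C"
    using clique_with_Q_vertex[OF assms q_in_Q] .
  with q_sections_within_x show ?thesis by blast
qed

end

section \<open>Interval models of G - xy\<close>

lemma max_clique_absorb:
  assumes "C \<in> max_cliques V E" "v \<in> V" "\<forall>w\<in>C. w \<noteq> v \<longrightarrow> {v, w} \<in> E"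
  shows "v \<in> C"
proof -
  have cl: "is_clique V E C" and mx: "\<forall>D. is_clique V E D \<and> C \<subseteq> D \<longrightarrow> D = C"
    using assms(1) unfolding max_cliques_def by auto
  have "is_clique V E (insert v C)"
    using cl assms(2,3) unfolding is_clique_def by (auto simp: insert_commute)
  with mx show ?thesis by blast
qed

lemma clique_extends_to_max_clique:
  assumes "finite V" "is_clique V E K"
  shows "\<exists>C\<in>max_cliques V E. K \<subseteq> C"
proof -
  have "{D. is_clique V E D} \<subseteq> Pow V" by (auto simp: is_clique_def)
  then have "finite {D. is_clique V E D}" using assms(1) by (simp add: finite_subset)
  from finite_has_maximal2[OF this] obtain C where
    "is_clique V E C" "K \<subseteq> C" "\<forall>D\<in>{D. is_clique V E D}. C \<subseteq> D \<longrightarrow> C = D"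
    using assms(2) by blast
  then show ?thesis unfolding max_cliques_def by blast
qed

definition clique_minus :: "'a \<Rightarrow> 'a \<Rightarrow> 'a set \<Rightarrow> 'a set" where
  "clique_minus x y C = (if x \<in> C \<and> y \<in> C then C - {x} else C)"

text \<open>In an interval model of G - xy, clique_minus x y C is a clique, so its intervals share the
  point clique_key; ordering the maximal cliques of G by this point makes every vertex other
  than x occupy a consecutive block.\<close>
definition clique_key :: "('a \<Rightarrow> real) \<Rightarrow> 'a \<Rightarrow> 'a \<Rightarrow> 'a set \<Rightarrow> real" where
  "clique_key lo x y C = Max (lo ` clique_minus x y C)"

locale interval_rep_minus_edge =
  fixes V :: "'a set" and E :: "'a set set" and lo hi :: "'a \<Rightarrow> real" and x y :: 'a
  assumes finite_V: "finite V"
    and lo_le_hi: "\<forall>v\<in>V. lo v \<le> hi v"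
    and rep: "\<forall>u\<in>V. \<forall>v\<in>V. u \<noteq> v \<longrightarrow> ({u, v} \<in> E - {{x, y}} \<longleftrightarrow> lo u \<le> hi v \<and> lo v \<le> hi u)"
    and x_ne_y: "x \<noteq> y" and x_in_V: "x \<in> V" and y_in_V: "y \<in> V"
begin

abbreviation K :: "'a set \<Rightarrow> real" where "K \<equiv> clique_key lo x y"

lemma max_clique_subset: "C \<in> max_cliques V E \<Longrightarrow> C \<subseteq> V"
  unfolding max_cliques_def is_clique_def by auto

lemma max_clique_nonempty: "C \<in> max_cliques V E \<Longrightarrow> C \<noteq> {}"
proof
  assume C: "C \<in> max_cliques V E" "C = {}"
  have "is_clique V E {x}" unfolding is_clique_def using x_in_V by auto
  with C show False unfolding max_cliques_def by blast
qed

lemma max_clique_edge: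
  "C \<in> max_cliques V E \<Longrightarrow> u \<in> C \<Longrightarrow> w \<in> C \<Longrightarrow> u \<noteq> w \<Longrightarrow> {u, w} \<in> E"
  unfolding max_cliques_def is_clique_def by auto

lemma x_y_disjoint: "\<not> (lo x \<le> hi y \<and> lo y \<le> hi x)"
  using rep x_ne_y x_in_V y_in_V by auto

lemma overlap_imp_edge:
  assumes "u \<in> V" "w \<in> V" "u \<noteq> w" "lo u \<le> hi w" "lo w \<le> hi u"
  shows "{u, w} \<in> E"
  using rep assms by blast

lemma key_stabs_clique_minus:
  assumes C: "C \<in> max_cliques V E" and w: "w \<in> clique_minus x y C"
  shows "lo w \<le> K C \<and> K C \<le> hi w"
proof -
  have sub: "clique_minus x y C \<subseteq> C" unfolding clique_minus_def by auto
  then have fin: "finite (clique_minus x y C)"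
    using max_clique_subset[OF C] finite_V by (meson finite_subset)
  have "clique_minus x y C \<noteq> {}"
    using max_clique_nonempty[OF C] x_ne_y unfolding clique_minus_def by auto
  then have "K C \<in> lo ` clique_minus x y C"
    unfolding clique_key_def using fin by (intro Max_in) auto
  then obtain u where u: "u \<in> clique_minus x y C" "K C = lo u" by auto
  have "lo u \<le> hi w"
  proof (cases "u = w")
    case True
    then show ?thesis using lo_le_hi max_clique_subset[OF C] w sub by auto
  next
    case False
    have uw: "u \<in> C" "w \<in> C" using u w sub by auto
    have "{u, w} \<noteq> {x, y}"
      using u w unfolding clique_minus_def by (auto simp: doubleton_eq_iff split: if_splits)
    with max_clique_edge[OF C uw False] have "{u, w} \<in> E - {{x, y}}" by simp
    with rep uw max_clique_subset[OF C] False show ?thesis by auto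
  qed
  moreover have "lo w \<le> K C" unfolding clique_key_def using fin w by simp
  ultimately show ?thesis using u by simp
qed

lemma key_absorb:
  assumes C: "C \<in> max_cliques V E" and not_both: "\<not> (x \<in> C \<and> y \<in> C)" and v: "v \<in> V"
    and stab: "lo v \<le> K C" "K C \<le> hi v"
  shows "v \<in> C"
proof (rule max_clique_absorb[OF C v], intro ballI impI)
  fix w assume w: "w \<in> C" "w \<noteq> v"
  have "clique_minus x y C = C" using not_both unfolding clique_minus_def by auto
  then have "lo w \<le> K C \<and> K C \<le> hi w" using key_stabs_clique_minus[OF C] w by simp
  then have "lo v \<le> hi w \<and> lo w \<le> hi v" using stab by linarith
  moreover have "w \<in> V" using w max_clique_subset[OF C] by blast
  ultimately show "{v, w} \<in> E" using overlap_imp_edge v w(2) by blast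
qed

end

locale interval_rep_witness = interval_rep_minus_edge +
  fixes q :: 'a
  assumes q_in_V: "q \<in> V" and q_ne_x: "q \<noteq> x" and q_ne_y: "q \<noteq> y"
    and y_cliques: "\<forall>C\<in>max_cliques V E. y \<in> C \<longrightarrow> x \<in> C \<and> q \<in> C"
    and q_cliques: "\<forall>C\<in>max_cliques V E. q \<in> C \<longrightarrow> x \<in> C"
begin

lemma key_stabs:
  "C \<in> max_cliques V E \<Longrightarrow> v \<in> C \<Longrightarrow> v \<noteq> x \<or> y \<notin> C \<Longrightarrow> lo v \<le> K C \<and> K C \<le> hi v"
  by (rule key_stabs_clique_minus) (auto simp: clique_minus_def)

lemma q_x_overlap: "lo q \<le> hi x \<and> lo x \<le> hi q"
proof -
  have "is_clique V E {q}" unfolding is_clique_def using q_in_V by auto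
  then obtain C where C: "C \<in> max_cliques V E" "q \<in> C"
    using clique_extends_to_max_clique[OF finite_V] by blast
  then have "{q, x} \<in> E" using q_cliques max_clique_edge q_ne_x by blast
  moreover have "{q, x} \<noteq> {x, y}" using q_ne_x q_ne_y by (auto simp: doubleton_eq_iff)
  ultimately show ?thesis using rep q_in_V x_in_V q_ne_x by blast
qed

text \<open>Such a v is adjacent to y, so it shares a maximal clique with y and hence with x.\<close>
lemma key_absorb_xy:
  assumes C: "C \<in> max_cliques V E" "x \<in> C" "y \<in> C"
    and v: "v \<in> V" "v \<noteq> x" and stab: "lo v \<le> K C" "K C \<le> hi v"
  shows "v \<in> C"
proof (cases "v = y")
  case False
  have "lo y \<le> K C \<and> K C \<le> hi y" using key_stabs[OF C(1,3)] x_ne_y by blast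
  then have "lo v \<le> hi y" "lo y \<le> hi v" using stab by linarith+
  with overlap_imp_edge[OF v(1) y_in_V False] have "{v, y} \<in> E" by blast
  then have "is_clique V E {v, y}"
    unfolding is_clique_def using v(1) y_in_V by (auto simp: insert_commute)
  then obtain M where M: "M \<in> max_cliques V E" "v \<in> M" "y \<in> M"
    using clique_extends_to_max_clique[OF finite_V] by blast
  then have "x \<in> M" using y_cliques by blast
  with M(1,2) v(2) have vx: "{v, x} \<in> E" using max_clique_edge by blast
  show ?thesis
  proof (rule max_clique_absorb[OF C(1) v(1)], intro ballI impI)
    fix w assume w: "w \<in> C" "w \<noteq> v"
    show "{v, w} \<in> E"
    proof (cases "w = x")
      case False
      then have "lo w \<le> K C \<and> K C \<le> hi w" using key_stabs[OF C(1) w(1)] by blast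
      then have "lo v \<le> hi w" "lo w \<le> hi v" using stab by linarith+
      moreover have "w \<in> V" using w max_clique_subset[OF C(1)] by blast
      ultimately show ?thesis using overlap_imp_edge v(1) w(2) by blast
    qed (use vx in simp)
  qed
qed (use C in simp)

lemma consecutive_other:
  assumes C: "C1 \<in> max_cliques V E" "C2 \<in> max_cliques V E" "C3 \<in> max_cliques V E"
    and K: "K C1 \<le> K C2" "K C2 \<le> K C3" and v: "v \<in> C1" "v \<in> C3" "v \<noteq> x"
  shows "v \<in> C2"
proof -
  have "lo v \<le> K C1" "K C3 \<le> hi v"
    using key_stabs[OF C(1) v(1)] key_stabs[OF C(3) v(2)] v(3) by blast+
  then have stab: "lo v \<le> K C2" "K C2 \<le> hi v" using K by linarith+
  have vV: "v \<in> V" using v max_clique_subset[OF C(1)] by blast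
  show ?thesis
  proof (cases "x \<in> C2 \<and> y \<in> C2")
    case True
    then show ?thesis using key_absorb_xy[OF C(2) _ _ vV v(3) stab] by blast
  next
    case False
    from key_absorb[OF C(2) False vV stab] show ?thesis .
  qed
qed

lemma key_of_x_clique:
  assumes "C \<in> max_cliques V E" "x \<in> C"
  shows "(lo x \<le> K C \<and> K C \<le> hi x) \<or>
    (lo y \<le> K C \<and> K C \<le> hi y \<and> lo q \<le> K C \<and> K C \<le> hi q)"
proof (cases "y \<in> C")
  case True
  then have "q \<in> C" using y_cliques assms(1) by blast
  then show ?thesis using key_stabs[OF assms(1)] True x_ne_y q_ne_x by blast
qed (use key_stabs[OF assms] in blast)

lemma key_of_x_free_clique:
  assumes C: "C \<in> max_cliques V E" "x \<notin> C"
  shows "\<not> (lo x \<le> K C \<and> K C \<le> hi x)" "\<not> (lo y \<le> K C \<and> K C \<le> hi y)"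
    "\<not> (lo q \<le> K C \<and> K C \<le> hi q)"
proof -
  have "y \<notin> C" "q \<notin> C" using C y_cliques q_cliques by blast+
  then show "\<not> (lo x \<le> K C \<and> K C \<le> hi x)" "\<not> (lo y \<le> K C \<and> K C \<le> hi y)"
    "\<not> (lo q \<le> K C \<and> K C \<le> hi q)"
    using key_absorb[OF C(1)] C(2) x_in_V y_in_V q_in_V by blast+
qed

lemma consecutive_x:
  assumes C: "C1 \<in> max_cliques V E" "C2 \<in> max_cliques V E" "C3 \<in> max_cliques V E"
    and K: "K C1 \<le> K C2" "K C2 \<le> K C3" and x: "x \<in> C1" "x \<in> C3"
  shows "x \<in> C2"
proof (rule ccontr)
  assume "x \<notin> C2"
  note free = key_of_x_free_clique[OF C(2) this]
  from key_of_x_clique[OF C(1) x(1)] key_of_x_clique[OF C(3) x(2)] show False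
    using free K q_x_overlap by (elim disjE conjE) linarith+
qed

lemma consecutive:
  assumes "C1 \<in> max_cliques V E" "C2 \<in> max_cliques V E" "C3 \<in> max_cliques V E"
    and "K C1 \<le> K C2" "K C2 \<le> K C3" "v \<in> C1" "v \<in> C3"
  shows "v \<in> C2"
  using assms consecutive_other consecutive_x by (cases "v = x") blast+

lemma sorted_key_no_sandwich:
  assumes "sorted (map K L)" "set L \<subseteq> max_cliques V E"
  shows "\<not> sandwich x y L"
proof
  assume "sandwich x y L"
  then obtain i j m where ijm: "i < j" "j < m" "m < length L" "x \<in> L ! i" "y \<notin> L ! i"
    "x \<in> L ! j" "y \<in> L ! j" "x \<in> L ! m" "y \<notin> L ! m" unfolding sandwich_def by blast
  have mem: "L ! i \<in> max_cliques V E" "L ! j \<in> max_cliques V E" "L ! m \<in> max_cliques V E"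
    using assms(2) ijm by auto
  have "K (L ! i) \<le> K (L ! j)" "K (L ! j) \<le> K (L ! m)"
    using sorted_nth_mono[OF assms(1), of i j] sorted_nth_mono[OF assms(1), of j m] ijm by auto
  moreover have "lo x \<le> K (L ! i)" "K (L ! m) \<le> hi x"
    using key_stabs[OF mem(1) ijm(4)] key_stabs[OF mem(3) ijm(8)] ijm(5,9) by blast+
  moreover have "lo y \<le> K (L ! j) \<and> K (L ! j) \<le> hi y"
    using key_stabs[OF mem(2) ijm(7)] x_ne_y by blast
  ultimately show False using x_y_disjoint by linarith
qed

lemma consecutive_order_without_sandwich:
  "\<exists>L. consecutive_clique_order V E L \<and> \<not> sandwich x y L"
proof -
  have "max_cliques V E \<subseteq> Pow V" using max_clique_subset by blast
  then have "finite (max_cliques V E)" using finite_V finite_subset by blast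
  then obtain xs where xs: "set xs = max_cliques V E" "distinct xs"
    using finite_distinct_list by blast
  define L where "L = sort_key K xs"
  have L: "set L = max_cliques V E" "distinct L" "sorted (map K L)"
    unfolding L_def using xs by simp_all
  have "consecutive_clique_order V E L"
    unfolding consecutive_clique_order_def
  proof (intro conjI allI impI)
    fix v i j k assume a: "i \<le> j \<and> j \<le> k \<and> k < length L \<and> v \<in> L ! i \<and> v \<in> L ! k"
    then have mem: "L ! i \<in> max_cliques V E" "L ! j \<in> max_cliques V E" "L ! k \<in> max_cliques V E"
      using L(1) nth_mem by (metis le_less_trans)+
    show "v \<in> L ! j"
      using consecutive[OF mem] sorted_nth_mono[OF L(3), of i j] sorted_nth_mono[OF L(3), of j k] a
      by auto
  qed (use L in simp_all)
  with sorted_key_no_sandwich[OF L(3)] L(1) show ?thesis by blast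
qed

end

lemma interval_edge_rep_minus_edge:
  assumes "interval_graph V E" "{x, y} \<in> E" "interval_edge V E x y"
  obtains lo hi where "interval_rep_minus_edge V E lo hi x y"
proof -
  have "interval_graph V (E - {{x, y}})" using assms(3) unfolding interval_edge_def by simp
  then obtain lo hi :: "'a \<Rightarrow> real" where lo_hi: "\<forall>v\<in>V. lo v \<le> hi v"
    and rep: "\<forall>u\<in>V. \<forall>v\<in>V. u \<noteq> v \<longrightarrow> ({u, v} \<in> E - {{x, y}} \<longleftrightarrow> lo u \<le> hi v \<and> lo v \<le> hi u)"
    unfolding interval_graph_def by (elim conjE exE) (rule that; assumption)
  have G: "graph V E" using assms(1) unfolding interval_graph_def by simp
  from G assms(2) obtain u v where "{x, y} = {u, v}" "u \<in> V" "v \<in> V" "u \<noteq> v"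
    unfolding graph_def by blast
  then have "x \<in> V" "y \<in> V" "x \<noteq> y" by (auto simp: doubleton_eq_iff)
  with G lo_hi rep have "interval_rep_minus_edge V E lo hi x y"
    unfolding graph_def by unfold_locales simp_all
  then show thesis by (rule that)
qed

lemma mpq_tree_central_start_witness:
  assumes T: "is_mpq_tree V E T" and xy: "x \<in> V" "y \<in> V"
    and "starts_in_central T x y ss a"
    and "q \<in> fst (ss ! a) - (fst (ss ! lsec ss x) \<union> fst (ss ! rsec ss x))"
  obtains rest where "central_start_witness T x y ss a (node_of T x) rest q"
proof -
  from assms(4) obtain rest where Q: "subtree_at T (node_of T x) = Some (QN ss)"
    and y_node: "node_of T y = node_of T x @ a # rest"
    and central: "lsec ss x < a" "a < rsec ss x"
    unfolding starts_in_central_def by blast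
  have "assigned T y (node_of T x @ a # rest)"
    using mpq_tree_assigned_node_of[OF T xy(2)] y_node by simp
  with mpq_tree_unique_assignment[OF T] is_mpq_treeD(5)[OF T]
    mpq_tree_assigned_node_of[OF T xy(1)] Q central assms(5)
  have "central_start_witness T x y ss a (node_of T x) rest q"
    by unfold_locales
  then show thesis by (rule that)
qed

theorem mainTheorem14:
  fixes V :: "'a set" and E :: "'a set set" and T :: "'a mpq"
    and x y q :: 'a and ss :: "('a set \<times> 'a mpq) list" and a :: nat
  assumes "interval_graph V E"
    and "is_mpq_tree V E T"
    and "{x, y} \<in> E"
    and "over T x y"
    and "node_of T x \<noteq> node_of T y"
    and "starts_in_central T x y ss a"
    and "q \<in> fst (ss ! a) - (fst (ss ! lsec ss x) \<union> fst (ss ! rsec ss x))"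
  shows "\<not> interval_edge V E x y"
proof
  assume "interval_edge V E x y"
  with assms(1,3) obtain lo hi where "interval_rep_minus_edge V E lo hi x y"
    by (rule interval_edge_rep_minus_edge)
  then interpret interval_rep_minus_edge V E lo hi x y .
  obtain rest where "central_start_witness T x y ss a (node_of T x) rest q"
    using mpq_tree_central_start_witness[OF assms(2) x_in_V y_in_V assms(6,7)] .
  then interpret central_start_witness T x y ss a "node_of T x" rest q .
  have cliques: "max_cliques V E = set (cliques T)" using is_mpq_treeD(3)[OF assms(2)] by simp
  have "q \<in> V" using q_in_tree is_mpq_treeD(1)[OF assms(2)] by blast
  with q_ne_x q_ne_y clique_with_y_contains_x_q clique_with_q_contains_x
  interpret interval_rep_witness V E lo hi x y q
    by unfold_locales (simp_all add: cliques)
  obtain L where "consecutive_clique_order V E L" "\<not> sandwich x y L"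
    using consecutive_order_without_sandwich by blast
  moreover from this(1) obtain T' where "equiv_tree T T'" "L = cliques T'"
    using is_mpq_treeD(4)[OF assms(2)] by blast
  ultimately show False using sandwich_equiv by blast
qed

end
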